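(* Let $a, A$ be real numbers with $a+3>0$ and $$\frac{a+3}{2}=\frac{2}{A+3},$$ let $b_1,\dots,b_N$ and $B_1,\dots,B_N$ be real numbers with $$\sqrt{\frac{2}{a+3}}\,(b_n+3)=\sqrt{\frac{2}{A+3}}\,(B_n+3)\qquad (n=1,\dots,N),$$ and let $\eta,\mathcal{E},\lambda_1,\dots,\lambda_N,L$ be real numbers. Consider the general polynomial potentials $$U(r)=\xi r^{a+1}+\sum_{n=1}^N\mu_n r^{b_n+1},\qquad V(\rho)=\eta\rho^{A+1}+\sum_{n=1}^N\lambda_n\rho^{B_n+1},$$ where the parameters of $U$ are related to those of $V$ by the replacements $\xi=-\mathcal{E}$ and $\mu_n=\lambda_n$ ($n=1,\dots,N$). Suppose $\theta$ satisfies the orbit equation for the potential $U$ with energy $E=-\eta$ and angular momentum $L$ on an open interval $I\subset(0,\infty)$. Then, with the coordinate transformation $r=\rho^{(A+3)/2}$, $\theta=\frac{A+3}{2}\phi$, i.e. with $$\phi(\rho)=\frac{2}{A+3}\,\theta\!\left(\rho^{(A+3)/2}\right),$$ the function $\phi$ satisfies the orbit equation for the potential $V$ with energy $\mathcal{E}$ and the same angular momentum $L$ on the interval $J=\{\rho>0:\rho^{(A+3)/2}\in I\}$.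
   Context: For a central potential $W$ on $(0,\infty)$, energy $E$ and angular momentum $L$, a differentiable function $\theta$ on an open interval $I\subset(0,\infty)$ is said to satisfy the (classical) orbit equation if for all $r\in I$ the quantity $E-\frac{L^2}{2r^2}-W(r)$ is positive and $$\frac{d\theta}{dr}=\frac{L/r^{2}}{\sqrt{2\left[E-\frac{L^{2}}{2r^{2}}-W(r)\right]}}.$$ The exponents $a,b_n,A,B_n$ are arbitrary real numbers (general polynomial potentials allow arbitrary real powers). *)

theory Defs
  imports "HOL-Analysis.Analysis"
begin

definition orbit_eq :: "(real \<Rightarrow> real) \<Rightarrow> real \<Rightarrow> real \<Rightarrow> (real \<Rightarrow> real) \<Rightarrow> real set \<Rightarrow> bool" where
  "orbit_eq W E L \<theta> I \<longleftrightarrow>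
     open I \<and> is_interval I \<and> I \<noteq> {} \<and> I \<subseteq> {0<..} \<and>
     (\<forall>r\<in>I. E - L\<^sup>2 / (2 * r\<^sup>2) - W r > 0 \<and>
        (\<theta> has_real_derivative (L / r\<^sup>2) / sqrt (2 * (E - L\<^sup>2 / (2 * r\<^sup>2) - W r))) (at r))"

definition gen_poly_pot :: "real \<Rightarrow> real \<Rightarrow> nat \<Rightarrow> (nat \<Rightarrow> real) \<Rightarrow> (nat \<Rightarrow> real) \<Rightarrow> real \<Rightarrow> real" where
  "gen_poly_pot c e N d f r = c * r powr (e + 1) + (\<Sum>n=1..N. d n * r powr (f n + 1))"

end

theory Submission
  imports Defs
begin

text \<open>Put \<open>r = \<rho>^k\<close> with \<open>k = (A+3)/2\<close> and multiply the effective energy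
  \<open>-\<eta> - L^2/(2r^2) - U(r)\<close> by \<open>\<rho>^(2k-2)\<close>: the centrifugal term becomes \<open>L^2/(2\<rho>^2)\<close>
  and each power \<open>r^(e+1)\<close> becomes \<open>\<rho>^(k(e+3)-2)\<close>. Since \<open>k(a+3) = 2\<close>, the term
  \<open>\<xi> r^(a+1)\<close> turns into the constant \<open>\<xi> = -\<E>\<close> and trades places with the energy
  \<open>-\<eta>\<close>, which becomes \<open>-\<eta> \<rho>^(A+1)\<close>; since \<open>k(b\<^sub>n+3) = B\<^sub>n+3\<close>, the other powers
  become those of \<open>V\<close>. So the new effective energy is \<open>\<rho>^(2k-2)\<close> times the old one, and
  in the chain rule the factor \<open>dr/d\<rho> = k \<rho>^(k-1)\<close> is exactly absorbed by the square root.\<close>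

lemma powr_powr_mult_rescale:
  fixes \<rho> k e :: real
  assumes "\<rho> > 0"
  shows "\<rho> powr (2*k - 2) * (\<rho> powr k) powr (e + 1) = \<rho> powr (k * (e + 3) - 2)"
proof -
  have "\<rho> powr (2*k - 2) * (\<rho> powr k) powr (e + 1) = \<rho> powr (2*k - 2 + k * (e + 1))"
    unfolding powr_powr by (rule powr_add[symmetric])
  also have "2*k - 2 + k * (e + 1) = k * (e + 3) - 2"
    by (simp add: algebra_simps)
  finally show ?thesis .
qed

lemma powr_square_eq_powr_double:
  fixes \<rho> k :: real
  assumes "\<rho> > 0"
  shows "(\<rho> powr k)\<^sup>2 = \<rho> powr (2*k)"
  using assms by (simp add: power2_eq_square powr_add[symmetric])

lemma powr_double_minus_two_mult_square:
  fixes \<rho> k :: real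
  assumes "\<rho> > 0"
  shows "\<rho> powr (2*k - 2) * \<rho>\<^sup>2 = (\<rho> powr k)\<^sup>2"
proof -
  have "\<rho> powr (2*k - 2) * \<rho>\<^sup>2 = \<rho> powr (2*k - 2) * \<rho> powr 2"
    using assms by (simp add: powr_numeral)
  also have "\<dots> = (\<rho> powr k)\<^sup>2"
    using powr_square_eq_powr_double[OF assms] by (simp add: powr_add[symmetric])
  finally show ?thesis .
qed

lemma powr_preimage_open_interval:
  fixes I :: "real set" and k :: real
  assumes "open I" "is_interval I" "I \<noteq> {}" "I \<subseteq> {0<..}" "k > 0"
  defines "J \<equiv> {\<rho>. \<rho> > 0 \<and> \<rho> powr k \<in> I}"
  shows "open J" "is_interval J" "J \<noteq> {}"
proof -
  have "continuous_on {0<..} (\<lambda>\<rho>::real. \<rho> powr k)"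
    by (intro continuous_intros) auto
  then have "open ((\<lambda>\<rho>. \<rho> powr k) -` I \<inter> {0<..})"
    using continuous_on_open_vimage[OF open_greaterThan] \<open>open I\<close> by blast
  moreover have "(\<lambda>\<rho>. \<rho> powr k) -` I \<inter> {0<..} = J"
    unfolding J_def by auto
  ultimately show "open J"
    by simp
  show "is_interval J"
    unfolding is_interval_1
  proof (intro ballI allI impI)
    fix x y z
    assume x: "x \<in> J" and y: "y \<in> J" and xzy: "x \<le> z \<and> z \<le> y"
    have "x powr k \<le> z powr k" "z powr k \<le> y powr k"
      using x xzy \<open>k > 0\<close> unfolding J_def by (auto intro: powr_mono2)
    then have "z powr k \<in> I"
      using \<open>is_interval I\<close> x y unfolding J_def is_interval_1 by blast
    then show "z \<in> J"
      using x xzy unfolding J_def by auto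
  qed
  obtain r where r: "r \<in> I"
    using \<open>I \<noteq> {}\<close> by auto
  with \<open>I \<subseteq> {0<..}\<close> have "r > 0"
    by auto
  with r \<open>k > 0\<close> have "r powr (1/k) \<in> J"
    unfolding J_def by (simp add: powr_powr)
  then show "J \<noteq> {}"
    by auto
qed

lemma orbit_derivative_powr_substitution:
  fixes \<theta> :: "real \<Rightarrow> real"
  assumes "\<rho> > 0" "k > 0" "D > 0"
    and "(\<theta> has_real_derivative (L / (\<rho> powr k)\<^sup>2) / sqrt (2 * D)) (at (\<rho> powr k))"
  shows "((\<lambda>\<rho>. \<theta> (\<rho> powr k) / k) has_real_derivative
           (L / \<rho>\<^sup>2) / sqrt (2 * (\<rho> powr (2*k - 2) * D))) (at \<rho>)"
proof -
  have "((\<lambda>\<rho>. \<theta> (\<rho> powr k)) has_real_derivative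
          (L / (\<rho> powr k)\<^sup>2) / sqrt (2 * D) * (k * \<rho> powr (k - 1))) (at \<rho>)"
    by (rule DERIV_chain2[OF assms(4) has_real_derivative_powr[OF assms(1)]])
  then have deriv: "((\<lambda>\<rho>. \<theta> (\<rho> powr k) / k) has_real_derivative
          (L / (\<rho> powr k)\<^sup>2) / sqrt (2 * D) * (k * \<rho> powr (k - 1)) / k) (at \<rho>)"
    by (rule DERIV_cdivide)
  have pow: "\<rho> powr (2*k - 2) = (\<rho> powr (k - 1))\<^sup>2"
    using powr_square_eq_powr_double[OF assms(1), of "k - 1"] by (simp add: algebra_simps)
  have sqrt: "sqrt (2 * (\<rho> powr (2*k - 2) * D)) = \<rho> powr (k - 1) * sqrt (2 * D)"
    unfolding pow by (simp add: real_sqrt_mult mult.left_commute)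
  have square: "(\<rho> powr k)\<^sup>2 = (\<rho> powr (k - 1))\<^sup>2 * \<rho>\<^sup>2"
    using powr_double_minus_two_mult_square[OF assms(1), of k] pow by simp
  have "(L / (\<rho> powr k)\<^sup>2) / sqrt (2 * D) * (k * \<rho> powr (k - 1)) / k
      = (L / \<rho>\<^sup>2) / sqrt (2 * (\<rho> powr (2*k - 2) * D))"
    unfolding sqrt square using assms(1-3) by (simp add: field_simps power2_eq_square)
  with deriv show ?thesis
    by simp
qed

lemma orbit_eq_powr_substitution:
  assumes orbit: "orbit_eq W E L \<theta> I" and "k > 0"
    and energy: "\<And>\<rho>. \<rho> > 0 \<Longrightarrow> \<rho> powr k \<in> I \<Longrightarrow>
      E' - L\<^sup>2 / (2 * \<rho>\<^sup>2) - V \<rho> =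
        \<rho> powr (2*k - 2) * (E - L\<^sup>2 / (2 * (\<rho> powr k)\<^sup>2) - W (\<rho> powr k))"
  shows "orbit_eq V E' L (\<lambda>\<rho>. \<theta> (\<rho> powr k) / k) {\<rho>. \<rho> > 0 \<and> \<rho> powr k \<in> I}"
proof -
  have I: "open I" "is_interval I" "I \<noteq> {}" "I \<subseteq> {0<..}"
    using orbit unfolding orbit_eq_def by auto
  have "E' - L\<^sup>2 / (2 * \<rho>\<^sup>2) - V \<rho> > 0 \<and>
      ((\<lambda>\<rho>. \<theta> (\<rho> powr k) / k) has_real_derivative
        (L / \<rho>\<^sup>2) / sqrt (2 * (E' - L\<^sup>2 / (2 * \<rho>\<^sup>2) - V \<rho>))) (at \<rho>)"
    if "\<rho> > 0" "\<rho> powr k \<in> I" for \<rho>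
  proof -
    define D where "D = E - L\<^sup>2 / (2 * (\<rho> powr k)\<^sup>2) - W (\<rho> powr k)"
    have "D > 0" "(\<theta> has_real_derivative (L / (\<rho> powr k)\<^sup>2) / sqrt (2 * D)) (at (\<rho> powr k))"
      using orbit \<open>\<rho> powr k \<in> I\<close> unfolding orbit_eq_def D_def by auto
    then show ?thesis
      using energy[OF that] orbit_derivative_powr_substitution[OF \<open>\<rho> > 0\<close> \<open>k > 0\<close>] \<open>\<rho> > 0\<close>
      unfolding D_def[symmetric] by simp
  qed
  then show ?thesis
    using powr_preimage_open_interval[OF I \<open>k > 0\<close>] unfolding orbit_eq_def by auto
qed

lemma gen_poly_pot_powr_duality:
  fixes \<rho> k a A \<eta> \<E> L :: real and b B lam :: "nat \<Rightarrow> real"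
  assumes "\<rho> > 0" "A + 3 = 2 * k" "k * (a + 3) = 2"
    and "\<And>n. n \<in> {1..N} \<Longrightarrow> k * (b n + 3) = B n + 3"
  shows "\<E> - L\<^sup>2 / (2 * \<rho>\<^sup>2) - gen_poly_pot \<eta> A N lam B \<rho> =
    \<rho> powr (2*k - 2) * (- \<eta> - L\<^sup>2 / (2 * (\<rho> powr k)\<^sup>2) - gen_poly_pot (- \<E>) a N lam b (\<rho> powr k))"
proof -
  let ?P = "\<rho> powr (2*k - 2)"
  have kinetic: "?P * (L\<^sup>2 / (2 * (\<rho> powr k)\<^sup>2)) = L\<^sup>2 / (2 * \<rho>\<^sup>2)"
    using powr_double_minus_two_mult_square[OF assms(1), of k, symmetric] assms(1)
    by (simp add: field_simps)
  have leading: "?P * (\<rho> powr k) powr (a + 1) = 1"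
    using powr_powr_mult_rescale[OF assms(1)] assms(1,3) by simp
  have sum: "?P * (\<Sum>n=1..N. lam n * (\<rho> powr k) powr (b n + 1)) = (\<Sum>n=1..N. lam n * \<rho> powr (B n + 1))"
    unfolding sum_distrib_left
  proof (rule sum.cong[OF refl])
    fix n
    assume "n \<in> {1..N}"
    then have exponent: "k * (b n + 3) - 2 = B n + 1"
      using assms(4) by simp
    show "?P * (lam n * (\<rho> powr k) powr (b n + 1)) = lam n * \<rho> powr (B n + 1)"
      using powr_powr_mult_rescale[OF assms(1), of k "b n", unfolded exponent]
      by (metis mult.left_commute)
  qed
  have "2*k - 2 = A + 1"
    using assms(2) by simp
  then have "?P = \<rho> powr (A + 1)"
    by (simp only:)
  with kinetic leading sum show ?thesis
    unfolding gen_poly_pot_def by (simp add: algebra_simps)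
qed

lemma exponent_relations_from_sqrt_scaling:
  fixes a A x y :: real
  assumes "a + 3 > 0" "(a + 3) / 2 = 2 / (A + 3)"
  shows "A + 3 > 0" "(A + 3) / 2 * (a + 3) = 2"
    and "sqrt (2 / (a + 3)) * x = sqrt (2 / (A + 3)) * y \<Longrightarrow> (A + 3) / 2 * x = y"
proof -
  have "2 / (A + 3) > 0"
    using assms by (metis divide_pos_pos zero_less_numeral)
  then show A: "A + 3 > 0"
    by (simp add: zero_less_divide_iff)
  show prod: "(A + 3) / 2 * (a + 3) = 2"
    using assms(2) A by (simp add: field_simps)
  define k where "k = (A + 3) / 2"
  have "k > 0"
    using A by (simp add: k_def)
  have "2 / (a + 3) = k" "2 / (A + 3) = 1 / k"
    using prod assms(1) by (simp_all add: k_def field_simps)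
  moreover assume "sqrt (2 / (a + 3)) * x = sqrt (2 / (A + 3)) * y"
  ultimately have "sqrt k * sqrt k * x = y"
    using \<open>k > 0\<close> by (simp add: real_sqrt_divide field_simps)
  then show "(A + 3) / 2 * x = y"
    using \<open>k > 0\<close> by (simp add: k_def)
qed

theorem mainTheorem1:
  fixes a A \<eta> \<E> L :: real and N :: nat
    and b B lam :: "nat \<Rightarrow> real"
    and \<xi> :: real and \<mu> :: "nat \<Rightarrow> real"
    and \<theta> :: "real \<Rightarrow> real" and I :: "real set"
  assumes ha: "a + 3 > 0"
    and haA: "(a + 3) / 2 = 2 / (A + 3)"
    and hbB: "\<forall>n\<in>{1..N}. sqrt (2 / (a + 3)) * (b n + 3) = sqrt (2 / (A + 3)) * (B n + 3)"
    and hxi: "\<xi> = - \<E>"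
    and hmu: "\<forall>n\<in>{1..N}. \<mu> n = lam n"
    and horb: "orbit_eq (gen_poly_pot \<xi> a N \<mu> b) (- \<eta>) L \<theta> I"
  shows "orbit_eq (gen_poly_pot \<eta> A N lam B) \<E> L
           (\<lambda>\<rho>. 2 / (A + 3) * \<theta> (\<rho> powr ((A + 3) / 2)))
           {\<rho>. \<rho> > 0 \<and> \<rho> powr ((A + 3) / 2) \<in> I}"
proof -
  define k where "k = (A + 3) / 2"
  note rel = exponent_relations_from_sqrt_scaling[OF ha haA, folded k_def]
  have k: "k > 0" "A + 3 = 2 * k" "k * (a + 3) = 2"
    using rel(1,2) by (simp_all add: k_def)
  have exps: "k * (b n + 3) = B n + 3" if "n \<in> {1..N}" for n
    using rel(3) hbB that by blast
  have "gen_poly_pot \<xi> a N \<mu> b = gen_poly_pot (- \<E>) a N lam b"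
    using hxi hmu by (simp add: gen_poly_pot_def fun_eq_iff)
  with horb have "orbit_eq (gen_poly_pot \<eta> A N lam B) \<E> L (\<lambda>\<rho>. \<theta> (\<rho> powr k) / k)
      {\<rho>. \<rho> > 0 \<and> \<rho> powr k \<in> I}"
    using gen_poly_pot_powr_duality[OF _ k(2,3) exps]
    by (intro orbit_eq_powr_substitution[OF _ k(1)]) simp_all
  moreover have "(\<lambda>\<rho>. \<theta> (\<rho> powr k) / k) = (\<lambda>\<rho>. 2 / (A + 3) * \<theta> (\<rho> powr k))"
    by (simp add: k_def fun_eq_iff)
  ultimately show ?thesis
    by (simp add: k_def)
qed

end
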